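(* Let $d,K\in\mathbb{N}$, $\mathbb{T}^d=(\mathbb{R}/\mathbb{Z})^d$, $E:\mathbb{T}^d\to\mathbb{R}^d$ of class $\mathcal{C}^\infty$, and $\sigma_1,\ldots,\sigma_K:\mathbb{T}^d\times\mathbb{R}^d\to\mathbb{R}$ of class $\mathcal{C}^\infty$ with $\sigma_k\in L^2_{x,v}$ for all $k$. Let $f_0\in L^2_{x,v}$ be non-random and $\tau\in(0,1)$. Define $f_0^{\rm add}=f_0$ and, for $n\ge0$, $$f_{n+1}^{\rm add}=S^2(\tau)S^1(\tau)f_n^{\rm add}+\sum_{k=1}^K\delta\beta_{n,k}\,\sigma_k,$$ where $S^1(\tau)f(x,v)=f(x-\tau v,v)$, $S^2(\tau)f(x,v)=f(x,v-\tau E(x))$, and $\delta\beta_{n,k}=\beta_k(t_{n+1})-\beta_k(t_n)$ with $t_n=n\tau$. Then for every integer $n\ge0$, $f_n^{\rm add}\in L^2(\Omega,L^2_{x,v})$ and $$\mathbb{E}\big[\|f_n^{\rm add}\|_{L^2_{x,v}}^2\big]=\|f_0\|_{L^2_{x,v}}^2+t_n\sum_{k=1}^K\|\sigma_k\|_{L^2_{x,v}}^2.$$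
   Context: $\beta_1,\ldots,\beta_K$ are independent standard real-valued Wiener processes on a filtered probability space $(\Omega,\mathcal{F},\mathbb{P})$. $L^p_{x,v}$ denotes $L^p(\mathbb{T}^d\times\mathbb{R}^d)$ with respect to Lebesgue measure. *)

theory Defs
  imports "HOL-Analysis.Analysis" "HOL-Probability.Probability"
begin

fun iter_deriv :: "'a::real_normed_vector list \<Rightarrow> ('a \<Rightarrow> real) \<Rightarrow> 'a \<Rightarrow> real" where
  "iter_deriv [] f = f"
| "iter_deriv (u # us) f = (\<lambda>x. frechet_derivative (iter_deriv us f) (at x) u)"

definition smooth_fun :: "('a::real_normed_vector \<Rightarrow> real) \<Rightarrow> bool" where
  "smooth_fun f \<longleftrightarrow> (\<forall>us x. iter_deriv us f differentiable (at x))"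

section \<open>Torus T^d = (R/Z)^d, functions on T^d x R^d as Z^d-periodic functions in x\<close>

definition int_vec :: "real^'d \<Rightarrow> bool" where
  "int_vec z \<longleftrightarrow> (\<forall>i. z $ i \<in> \<int>)"

definition periodic_on_torus :: "(real^'d \<Rightarrow> 'b) \<Rightarrow> bool" where
  "periodic_on_torus E \<longleftrightarrow> (\<forall>x z. int_vec z \<longrightarrow> E (x + z) = E x)"

definition x_periodic :: "((real^'d) \<times> (real^'d) \<Rightarrow> 'b) \<Rightarrow> bool" where
  "x_periodic f \<longleftrightarrow> (\<forall>x v z. int_vec z \<longrightarrow> f (x + z, v) = f (x, v))"

text \<open>Fundamental cell [0,1)^d of the torus, and the phase-space domain T^d x R^d.\<close>
definition torus_cell :: "(real^'d) set" where
  "torus_cell = {x. \<forall>i. 0 \<le> x $ i \<and> x $ i < 1}"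

definition phase_dom :: "((real^'d) \<times> (real^'d)) set" where
  "phase_dom = torus_cell \<times> UNIV"

definition in_L2xv :: "((real^'d) \<times> (real^'d) \<Rightarrow> real) \<Rightarrow> bool" where
  "in_L2xv f \<longleftrightarrow> x_periodic f \<and> f \<in> borel_measurable lborel
      \<and> set_integrable lborel phase_dom (\<lambda>z. (f z)\<^sup>2)"

definition L2xv_norm :: "((real^'d) \<times> (real^'d) \<Rightarrow> real) \<Rightarrow> real" where
  "L2xv_norm f = sqrt (LINT z:phase_dom|lborel. (f z)\<^sup>2)"

definition S1 :: "real \<Rightarrow> ((real^'d) \<times> (real^'d) \<Rightarrow> real) \<Rightarrow> (real^'d) \<times> (real^'d) \<Rightarrow> real" where
  "S1 \<tau> f = (\<lambda>(x, v). f (x - \<tau> *\<^sub>R v, v))"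

definition S2 :: "(real^'d \<Rightarrow> real^'d) \<Rightarrow> real \<Rightarrow> ((real^'d) \<times> (real^'d) \<Rightarrow> real) \<Rightarrow> (real^'d) \<times> (real^'d) \<Rightarrow> real" where
  "S2 E \<tau> f = (\<lambda>(x, v). f (x, v - \<tau> *\<^sub>R E x))"

text \<open>The additive-noise splitting scheme; Wiener processes indexed 0..K-1, t_n = n tau.\<close>
primrec f_add ::
  "(real^'d \<Rightarrow> real^'d) \<Rightarrow> (nat \<Rightarrow> (real^'d) \<times> (real^'d) \<Rightarrow> real) \<Rightarrow> nat
   \<Rightarrow> (nat \<Rightarrow> real \<Rightarrow> 'w \<Rightarrow> real) \<Rightarrow> real \<Rightarrow> ((real^'d) \<times> (real^'d) \<Rightarrow> real)
   \<Rightarrow> nat \<Rightarrow> 'w \<Rightarrow> (real^'d) \<times> (real^'d) \<Rightarrow> real" where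
  "f_add E \<sigma> K \<beta> \<tau> f0 0 = (\<lambda>\<omega>. f0)"
| "f_add E \<sigma> K \<beta> \<tau> f0 (Suc n) = (\<lambda>\<omega> z.
      S2 E \<tau> (S1 \<tau> (f_add E \<sigma> K \<beta> \<tau> f0 n \<omega>)) z
      + (\<Sum>k<K. (\<beta> k (real (Suc n) * \<tau>) \<omega> - \<beta> k (real n * \<tau>) \<omega>) * \<sigma> k z))"

definition wiener_family ::
  "'w measure \<Rightarrow> (real \<Rightarrow> 'w set set) \<Rightarrow> nat \<Rightarrow> (nat \<Rightarrow> real \<Rightarrow> 'w \<Rightarrow> real) \<Rightarrow> bool" where
  "wiener_family M F K \<beta> \<longleftrightarrow>
     prob_space M
   \<and> (\<forall>t. F t \<subseteq> sets M \<and> sigma_algebra (space M) (F t))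
   \<and> (\<forall>s t. s \<le> t \<longrightarrow> F s \<subseteq> F t)
   \<and> (\<forall>k<K. \<forall>t\<ge>0. \<forall>A\<in>sets borel. \<beta> k t -` A \<inter> space M \<in> F t)
   \<and> (\<forall>k<K. AE \<omega> in M. \<beta> k 0 \<omega> = 0)
   \<and> (\<forall>k<K. AE \<omega> in M. continuous_on {0..} (\<lambda>t. \<beta> k t \<omega>))
   \<and> (\<forall>k<K. \<forall>s t. 0 \<le> s \<and> s < t \<longrightarrow>
        distributed M lborel (\<lambda>\<omega>. \<beta> k t \<omega> - \<beta> k s \<omega>) (normal_density 0 (sqrt (t - s))))
   \<and> (\<forall>s t. 0 \<le> s \<and> s < t \<longrightarrow>
        prob_space.indep_sets M
          (\<lambda>i. case i of None \<Rightarrow> F s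
                | Some k \<Rightarrow> {(\<lambda>\<omega>. \<beta> k t \<omega> - \<beta> k s \<omega>) -` A \<inter> space M | A. A \<in> sets borel})
          (insert None (Some ` {..<K})))"

end

theory Submission
  imports Defs
begin

text \<open>
  The deterministic part \<open>S2 E \<tau> \<circ> S1 \<tau>\<close> is the pull-back along the composition of a shear
  \<open>(x, v) \<mapsto> (x, v - \<tau> E x)\<close> with a free transport \<open>(x, v) \<mapsto> (x - \<tau> v, v)\<close>. Both preserve
  Lebesgue measure, and since all integrands are periodic in \<open>x\<close> a translate of the fundamental
  cell may be replaced by the cell itself; so \<open>S2 E \<tau> \<circ> S1 \<tau>\<close> is an isometry of \<open>L2xv\<close>.
  Expanding the squared norm of \<open>u + (\<Sum>k. \<delta>\<beta>\<^sub>k \<sigma>\<^sub>k)\<close> with \<open>u = S2 E \<tau> (S1 \<tau> f\<^sub>n)\<close>, the cross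
  terms \<open>\<delta>\<beta>\<^sub>k \<langle>u, \<sigma>\<^sub>k\<rangle>\<close> have mean zero, because \<open>\<langle>u, \<sigma>\<^sub>k\<rangle>\<close> is measurable with respect to the
  past \<open>F t\<^sub>n\<close> and the centred increments are independent of it, while the products of increments
  have mean \<open>\<tau>\<close> on the diagonal and \<open>0\<close> off it. Thus each step adds \<open>\<tau> \<Sum>k. \<parallel>\<sigma>\<^sub>k\<parallel>\<^sup>2\<close> to the
  mean energy.
\<close>

section \<open>Translation invariance on the torus\<close>

lemma measurable_fst_borel [measurable]:
  "fst \<in> borel_measurable (borel :: ('a::euclidean_space \<times> 'b::euclidean_space) measure)"
  by (simp add: borel_prod[symmetric])

lemma measurable_snd_borel [measurable]:
  "snd \<in> borel_measurable (borel :: ('a::euclidean_space \<times> 'b::euclidean_space) measure)"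
  by (simp add: borel_prod[symmetric])

lemma nn_integral_lborel_translate:
  fixes g :: "'a::euclidean_space \<Rightarrow> ennreal"
  assumes [measurable]: "g \<in> borel_measurable borel"
  shows "(\<integral>\<^sup>+x. g (x + a) \<partial>lborel) = (\<integral>\<^sup>+x. g x \<partial>lborel)"
proof -
  have "(\<integral>\<^sup>+x. g x \<partial>lborel) = (\<integral>\<^sup>+x. g x \<partial>distr lborel borel ((+) a))"
    by (simp add: lborel_distr_plus)
  also have "\<dots> = (\<integral>\<^sup>+x. g (a + x) \<partial>lborel)"
    by (subst nn_integral_distr) auto
  finally show ?thesis
    by (simp add: add.commute)
qed

lemma torus_cell_borel [measurable]: "torus_cell \<in> sets (borel :: (real^'d) measure)"
proof -
  have "torus_cell = (\<Inter>i. {x::real^'d. 0 \<le> x $ i} \<inter> {x. x $ i < 1})"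
    by (auto simp: torus_cell_def)
  also have "\<dots> \<in> sets borel"
    by measurable
  finally show ?thesis .
qed

lemma phase_dom_borel [measurable]: "phase_dom \<in> sets (borel :: ((real^'d) \<times> (real^'d)) measure)"
proof -
  have "phase_dom = fst -` torus_cell \<inter> space (borel :: ((real^'d) \<times> (real^'d)) measure)"
    by (auto simp: phase_dom_def)
  also have "\<dots> \<in> sets borel"
    by measurable
  finally show ?thesis .
qed

lemma int_vec_scaleR_axis: "int_vec (of_int m *\<^sub>R axis i (1::real))"
  unfolding int_vec_def by (auto simp: axis_def)

lemma periodic_on_torus_translate:
  "periodic_on_torus g \<Longrightarrow> periodic_on_torus (\<lambda>x. g (x + a))"
  unfolding periodic_on_torus_def by (metis add.assoc add.commute)

lemma nn_integral_torus_cell_translate_axis_unit: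
  fixes g :: "real^'d \<Rightarrow> ennreal"
  assumes [measurable]: "g \<in> borel_measurable borel"
    and per: "periodic_on_torus g"
    and c: "0 \<le> c" "c < 1"
  shows "(\<integral>\<^sup>+x. indicator torus_cell x * g (x + c *\<^sub>R axis i 1) \<partial>lborel)
       = (\<integral>\<^sup>+x. indicator torus_cell x * g x \<partial>lborel)"
proof -
  define e :: "real^'d" where "e = axis i 1"
  define C1 where "C1 = {y \<in> torus_cell. c \<le> y $ i}"
  define C2 where "C2 = {y \<in> torus_cell. y $ i < c}"
  have [measurable]: "C1 \<in> sets borel" "C2 \<in> sets borel"
    unfolding C1_def C2_def by measurable
  have mem: "y - a *\<^sub>R e \<in> torus_cell \<longleftrightarrow>
      (\<forall>j. j \<noteq> i \<longrightarrow> 0 \<le> y $ j \<and> y $ j < 1) \<and> a \<le> y $ i \<and> y $ i < 1 + a" for y a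
    unfolding torus_cell_def e_def by (auto simp: axis_def)
  \<comment> \<open>The cell translated by \<open>c e\<close> is the part \<open>C1\<close> of the cell above level \<open>c\<close>
      together with the translate by \<open>e\<close> of the part \<open>C2\<close> below it.\<close>
  have split_cell: "indicator torus_cell (y - c *\<^sub>R e) = (indicator C1 y + indicator C2 (y - e) :: ennreal)" for y
    using mem[of y c] mem[of y 0] mem[of y 1] c
    by (auto simp: indicator_def C1_def C2_def e_def axis_def)
  have "(\<integral>\<^sup>+x. indicator torus_cell x * g (x + c *\<^sub>R e) \<partial>lborel)
      = (\<integral>\<^sup>+y. indicator torus_cell (y - c *\<^sub>R e) * g y \<partial>lborel)"
    using nn_integral_lborel_translate[of "\<lambda>y. indicator torus_cell (y - c *\<^sub>R e) * g y" "c *\<^sub>R e"]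
    by simp
  also have "\<dots> = (\<integral>\<^sup>+y. indicator C1 y * g y \<partial>lborel) + (\<integral>\<^sup>+y. indicator C2 (y - e) * g y \<partial>lborel)"
    by (simp add: split_cell distrib_right nn_integral_add)
  also have "(\<integral>\<^sup>+y. indicator C2 (y - e) * g y \<partial>lborel) = (\<integral>\<^sup>+y. indicator C2 y * g (y + e) \<partial>lborel)"
    using nn_integral_lborel_translate[of "\<lambda>y. indicator C2 (y - e) * g y" e] by simp
  also have "\<dots> = (\<integral>\<^sup>+y. indicator C2 y * g y \<partial>lborel)"
    using per int_vec_scaleR_axis[of 1 i] by (simp add: periodic_on_torus_def e_def)
  also have "(\<integral>\<^sup>+y. indicator C1 y * g y \<partial>lborel) + \<dots> = (\<integral>\<^sup>+y. indicator torus_cell y * g y \<partial>lborel)"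
    by (subst nn_integral_add[symmetric]) (auto simp: C1_def C2_def indicator_def intro!: nn_integral_cong)
  finally show ?thesis
    by (simp add: e_def)
qed

lemma nn_integral_torus_cell_translate_axis:
  fixes g :: "real^'d \<Rightarrow> ennreal"
  assumes "g \<in> borel_measurable borel" and per: "periodic_on_torus g"
  shows "(\<integral>\<^sup>+x. indicator torus_cell x * g (x + c *\<^sub>R axis i 1) \<partial>lborel)
       = (\<integral>\<^sup>+x. indicator torus_cell x * g x \<partial>lborel)"
proof -
  have "g (x + c *\<^sub>R axis i 1) = g (x + frac c *\<^sub>R axis i 1)" for x
  proof -
    have "x + c *\<^sub>R axis i 1 = (x + frac c *\<^sub>R axis i 1) + of_int \<lfloor>c\<rfloor> *\<^sub>R axis i 1"
      by (simp add: frac_def algebra_simps)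
    then show ?thesis
      using per int_vec_scaleR_axis[of "\<lfloor>c\<rfloor>" i] unfolding periodic_on_torus_def by metis
  qed
  then show ?thesis
    using nn_integral_torus_cell_translate_axis_unit[OF assms] by (simp add: frac_lt_1)
qed

lemma nn_integral_torus_cell_translate:
  fixes g :: "real^'d \<Rightarrow> ennreal"
  assumes "g \<in> borel_measurable borel" and "periodic_on_torus g"
  shows "(\<integral>\<^sup>+x. indicator torus_cell x * g (x + a) \<partial>lborel)
       = (\<integral>\<^sup>+x. indicator torus_cell x * g x \<partial>lborel)"
proof -
  have translate_sum: "(\<integral>\<^sup>+x. indicator torus_cell x * g (x + (\<Sum>j\<in>S. a $ j *\<^sub>R axis j 1)) \<partial>lborel)
      = (\<integral>\<^sup>+x. indicator torus_cell x * g x \<partial>lborel)" if "finite S" for S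
    using that assms
  proof (induction S arbitrary: g rule: finite_induct)
    case (insert j S)
    let ?g = "\<lambda>x. g (x + a $ j *\<^sub>R axis j 1)"
    have shift: "g (x + (\<Sum>j\<in>insert j S. a $ j *\<^sub>R axis j 1)) = ?g (x + (\<Sum>j\<in>S. a $ j *\<^sub>R axis j 1))" for x
      using insert.hyps by (simp add: algebra_simps)
    have "?g \<in> borel_measurable borel"
      using insert.prems(1) by measurable
    moreover have "periodic_on_torus ?g"
      using insert.prems(2) by (rule periodic_on_torus_translate)
    ultimately have "(\<integral>\<^sup>+x. indicator torus_cell x * ?g (x + (\<Sum>j\<in>S. a $ j *\<^sub>R axis j 1)) \<partial>lborel)
        = (\<integral>\<^sup>+x. indicator torus_cell x * ?g x \<partial>lborel)"
      by (rule insert.IH)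
    also have "\<dots> = (\<integral>\<^sup>+x. indicator torus_cell x * g x \<partial>lborel)"
      using insert.prems by (rule nn_integral_torus_cell_translate_axis)
    finally show ?case
      using insert.hyps by (simp only: shift)
  qed simp
  have "(\<Sum>j\<in>UNIV. a $ j *\<^sub>R axis j 1) = a"
    using basis_expansion[of a] by (simp add: scalar_mult_eq_scaleR)
  then show ?thesis
    using translate_sum[of UNIV] by simp
qed

section \<open>Measure-preserving maps of phase space\<close>

lemma nn_integral_phase_dom_x_outer:
  fixes h :: "(real^'d) \<times> (real^'d) \<Rightarrow> ennreal"
  assumes [measurable]: "h \<in> borel_measurable borel"
  shows "(\<integral>\<^sup>+z. indicator phase_dom z * h z \<partial>lborel)
       = (\<integral>\<^sup>+x. indicator torus_cell x * (\<integral>\<^sup>+v. h (x, v) \<partial>lborel) \<partial>lborel)"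
proof -
  have [measurable]: "h \<in> borel_measurable (lborel \<Otimes>\<^sub>M lborel)"
    by (simp add: lborel_prod)
  have "(\<integral>\<^sup>+z. indicator phase_dom z * h z \<partial>lborel)
      = (\<integral>\<^sup>+x. \<integral>\<^sup>+v. indicator torus_cell x * h (x, v) \<partial>lborel \<partial>lborel)"
    by (subst lborel_prod[symmetric], subst lborel.nn_integral_fst[symmetric])
       (auto simp: phase_dom_def indicator_def)
  then show ?thesis
    by (simp add: nn_integral_cmult)
qed

lemma nn_integral_phase_dom_v_outer:
  fixes h :: "(real^'d) \<times> (real^'d) \<Rightarrow> ennreal"
  assumes [measurable]: "h \<in> borel_measurable borel"
  shows "(\<integral>\<^sup>+z. indicator phase_dom z * h z \<partial>lborel)
       = (\<integral>\<^sup>+v. \<integral>\<^sup>+x. indicator torus_cell x * h (x, v) \<partial>lborel \<partial>lborel)"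
proof -
  have [measurable]: "h \<in> borel_measurable (lborel \<Otimes>\<^sub>M lborel)"
    by (simp add: lborel_prod)
  show ?thesis
    by (subst lborel_prod[symmetric], subst lborel_pair.nn_integral_snd[symmetric])
       (auto simp: phase_dom_def indicator_def)
qed

lemma nn_integral_phase_dom_free_transport:
  fixes h :: "(real^'d) \<times> (real^'d) \<Rightarrow> ennreal"
  assumes [measurable]: "h \<in> borel_measurable borel" and per: "x_periodic h"
  shows "(\<integral>\<^sup>+z. indicator phase_dom z * h (fst z - t *\<^sub>R snd z, snd z) \<partial>lborel)
       = (\<integral>\<^sup>+z. indicator phase_dom z * h z \<partial>lborel)"
proof -
  have "periodic_on_torus (\<lambda>x. h (x, v))" for v
    using per by (simp add: x_periodic_def periodic_on_torus_def)
  then have "(\<integral>\<^sup>+x. indicator torus_cell x * h (x + - t *\<^sub>R v, v) \<partial>lborel)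
      = (\<integral>\<^sup>+x. indicator torus_cell x * h (x, v) \<partial>lborel)" for v
    by (intro nn_integral_torus_cell_translate[where g = "\<lambda>x. h (x, v)"]) auto
  then show ?thesis
    by (subst (1 2) nn_integral_phase_dom_v_outer) simp_all
qed

lemma nn_integral_phase_dom_shear:
  fixes h :: "(real^'d) \<times> (real^'d) \<Rightarrow> ennreal" and E :: "real^'d \<Rightarrow> real^'d"
  assumes [measurable]: "h \<in> borel_measurable borel" "E \<in> borel_measurable borel"
  shows "(\<integral>\<^sup>+z. indicator phase_dom z * h (fst z, snd z - t *\<^sub>R E (fst z)) \<partial>lborel)
       = (\<integral>\<^sup>+z. indicator phase_dom z * h z \<partial>lborel)"
proof -
  have "(\<integral>\<^sup>+v. h (x, v + - t *\<^sub>R E x) \<partial>lborel) = (\<integral>\<^sup>+v. h (x, v) \<partial>lborel)" for x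
    by (rule nn_integral_lborel_translate) measurable
  then show ?thesis
    by (subst (1 2) nn_integral_phase_dom_x_outer) simp_all
qed

definition splitting_map ::
  "(real^'d \<Rightarrow> real^'d) \<Rightarrow> real \<Rightarrow> (real^'d) \<times> (real^'d) \<Rightarrow> (real^'d) \<times> (real^'d)" where
  "splitting_map E t z = (fst z - t *\<^sub>R (snd z - t *\<^sub>R E (fst z)), snd z - t *\<^sub>R E (fst z))"

lemma S2_S1_eq_splitting_map: "S2 E t (S1 t f) = f \<circ> splitting_map E t"
  by (auto simp: S1_def S2_def splitting_map_def)

lemma splitting_map_measurable [measurable]:
  assumes [measurable]: "E \<in> borel_measurable borel"
  shows "splitting_map E t \<in> borel_measurable borel"
  unfolding splitting_map_def borel_prod[symmetric] by measurable

lemma nn_integral_phase_dom_splitting_map: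
  fixes h :: "(real^'d) \<times> (real^'d) \<Rightarrow> ennreal"
  assumes [measurable]: "h \<in> borel_measurable borel" "E \<in> borel_measurable borel"
    and "x_periodic h"
  shows "(\<integral>\<^sup>+z. indicator phase_dom z * h (splitting_map E t z) \<partial>lborel)
       = (\<integral>\<^sup>+z. indicator phase_dom z * h z \<partial>lborel)"
proof -
  let ?h = "\<lambda>z. h (fst z - t *\<^sub>R snd z, snd z)"
  have "(\<integral>\<^sup>+z. indicator phase_dom z * h (splitting_map E t z) \<partial>lborel)
      = (\<integral>\<^sup>+z. indicator phase_dom z * ?h (fst z, snd z - t *\<^sub>R E (fst z)) \<partial>lborel)"
    by (simp add: splitting_map_def)
  also have "\<dots> = (\<integral>\<^sup>+z. indicator phase_dom z * ?h z \<partial>lborel)"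
    by (rule nn_integral_phase_dom_shear) measurable
  also have "\<dots> = (\<integral>\<^sup>+z. indicator phase_dom z * h z \<partial>lborel)"
    by (rule nn_integral_phase_dom_free_transport) fact+
  finally show ?thesis .
qed

section \<open>The Hilbert space \<open>L\<^sup>2\<^sub>x\<^sub>,\<^sub>v\<close>\<close>

definition L2xv_inner ::
  "((real^'d) \<times> (real^'d) \<Rightarrow> real) \<Rightarrow> ((real^'d) \<times> (real^'d) \<Rightarrow> real) \<Rightarrow> real" where
  "L2xv_inner f g = (LINT z:phase_dom|lborel. f z * g z)"

lemma L2xv_inner_commute: "L2xv_inner f g = L2xv_inner g f"
  by (simp add: L2xv_inner_def mult.commute)

lemma L2xv_inner_self_nonneg: "0 \<le> L2xv_inner f f"
  unfolding L2xv_inner_def set_lebesgue_integral_def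
  by (rule Bochner_Integration.integral_nonneg) (simp add: indicator_def)

lemma power2_L2xv_norm: "(L2xv_norm f)\<^sup>2 = L2xv_inner f f"
  using L2xv_inner_self_nonneg[of f]
  by (simp add: L2xv_norm_def L2xv_inner_def power2_eq_square)

lemma abs_mult_le_sum_squares: "\<bar>x * y\<bar> \<le> x\<^sup>2 + (y::real)\<^sup>2"
proof -
  have "2 * (\<bar>x\<bar> * \<bar>y\<bar>) \<le> x\<^sup>2 + y\<^sup>2"
    using sum_squares_bound[of "\<bar>x\<bar>" "\<bar>y\<bar>"] by (simp add: mult.assoc)
  moreover have "0 \<le> \<bar>x\<bar> * \<bar>y\<bar>"
    by simp
  ultimately show ?thesis
    unfolding abs_mult by linarith
qed

lemma set_integrable_L2xv_mult:
  assumes f: "in_L2xv f" and g: "in_L2xv g"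
  shows "set_integrable lborel phase_dom (\<lambda>z. f z * g z)"
proof (rule set_integrable_bound)
  have [measurable]: "f \<in> borel_measurable borel" "g \<in> borel_measurable borel"
    using f g by (simp_all add: in_L2xv_def)
  show "set_integrable lborel phase_dom (\<lambda>z. (f z)\<^sup>2 + (g z)\<^sup>2)"
    using f g by (simp add: in_L2xv_def)
  show "set_borel_measurable lborel phase_dom (\<lambda>z. f z * g z)"
    unfolding set_borel_measurable_def by measurable
  show "AE z in lborel. z \<in> phase_dom \<longrightarrow> norm (f z * g z) \<le> norm ((f z)\<^sup>2 + (g z)\<^sup>2)"
    using abs_mult_le_sum_squares by auto
qed

lemma abs_L2xv_inner_le:
  assumes f: "in_L2xv f" and g: "in_L2xv g"
  shows "\<bar>L2xv_inner f g\<bar> \<le> L2xv_inner f f + L2xv_inner g g"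
proof -
  have fg: "set_integrable lborel phase_dom (\<lambda>z. f z * g z)"
    and sq: "set_integrable lborel phase_dom (\<lambda>z. f z * f z + g z * g z)"
    using set_integrable_L2xv_mult[OF f g] set_integrable_L2xv_mult[OF f f]
      set_integrable_L2xv_mult[OF g g] by auto
  have "\<bar>L2xv_inner f g\<bar> \<le> (LINT z:phase_dom|lborel. \<bar>f z * g z\<bar>)"
    using set_integral_norm_bound[OF fg] by (simp add: L2xv_inner_def)
  also have "\<dots> \<le> (LINT z:phase_dom|lborel. f z * f z + g z * g z)"
    using fg sq abs_mult_le_sum_squares
    by (intro set_integral_mono) (auto simp: set_integrable_abs power2_eq_square)
  also have "\<dots> = L2xv_inner f f + L2xv_inner g g"
    using set_integrable_L2xv_mult[OF f f] set_integrable_L2xv_mult[OF g g]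
    by (simp add: L2xv_inner_def)
  finally show ?thesis .
qed

lemma in_L2xv_zero: "in_L2xv (\<lambda>z. 0)"
  by (simp add: in_L2xv_def x_periodic_def set_integrable_def)

lemma in_L2xv_add:
  assumes f: "in_L2xv f" and g: "in_L2xv g"
  shows "in_L2xv (\<lambda>z. f z + g z)"
proof -
  have "set_integrable lborel phase_dom (\<lambda>z. ((f z)\<^sup>2 + (g z)\<^sup>2) + 2 * (f z * g z))"
    using f g set_integrable_L2xv_mult[OF f g] unfolding in_L2xv_def
    by (intro set_integral_add(1) set_integrable_mult_right) auto
  then show ?thesis
    using f g by (auto simp: in_L2xv_def x_periodic_def power2_sum mult.assoc)
qed

lemma in_L2xv_cmult: "in_L2xv f \<Longrightarrow> in_L2xv (\<lambda>z. c * f z)"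
  by (auto simp: in_L2xv_def x_periodic_def power_mult_distrib)

lemma in_L2xv_sum:
  "(\<And>k. k \<in> A \<Longrightarrow> in_L2xv (g k)) \<Longrightarrow> in_L2xv (\<lambda>z. \<Sum>k\<in>A. c k * g k z)"
  by (induction A rule: infinite_finite_induct) (simp_all add: in_L2xv_zero in_L2xv_add in_L2xv_cmult)

lemma L2xv_inner_sum_right:
  assumes "in_L2xv f" "\<And>k. k \<in> A \<Longrightarrow> in_L2xv (g k)"
  shows "L2xv_inner f (\<lambda>z. \<Sum>k\<in>A. c k * g k z) = (\<Sum>k\<in>A. c k * L2xv_inner f (g k))"
proof -
  have int: "set_integrable lborel phase_dom (\<lambda>z. c k * (f z * g k z))" if "k \<in> A" for k
    using assms that by (intro set_integrable_mult_right set_integrable_L2xv_mult) auto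
  have "L2xv_inner f (\<lambda>z. \<Sum>k\<in>A. c k * g k z)
      = (LINT z:phase_dom|lborel. (\<Sum>k\<in>A. c k * (f z * g k z)))"
    unfolding L2xv_inner_def by (simp add: sum_distrib_left mult.left_commute)
  also have "\<dots> = (\<Sum>k\<in>A. LINT z:phase_dom|lborel. c k * (f z * g k z))"
    using int unfolding set_lebesgue_integral_def set_integrable_def scaleR_sum_right
    by (rule Bochner_Integration.integral_sum)
  also have "\<dots> = (\<Sum>k\<in>A. c k * L2xv_inner f (g k))"
    by (simp add: L2xv_inner_def)
  finally show ?thesis .
qed

lemma L2xv_inner_add_self:
  assumes f: "in_L2xv f" and g: "in_L2xv g"
  shows "L2xv_inner (\<lambda>z. f z + g z) (\<lambda>z. f z + g z)
       = L2xv_inner f f + 2 * L2xv_inner f g + L2xv_inner g g"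
proof -
  have ff: "set_integrable lborel phase_dom (\<lambda>z. f z * f z)"
    and fg: "set_integrable lborel phase_dom (\<lambda>z. 2 * (f z * g z))"
    and gg: "set_integrable lborel phase_dom (\<lambda>z. g z * g z)"
    using set_integrable_L2xv_mult f g by auto
  have "L2xv_inner (\<lambda>z. f z + g z) (\<lambda>z. f z + g z)
      = (LINT z:phase_dom|lborel. (f z * f z + 2 * (f z * g z)) + g z * g z)"
    unfolding L2xv_inner_def by (simp add: algebra_simps)
  also have "\<dots> = (LINT z:phase_dom|lborel. f z * f z + 2 * (f z * g z)) + L2xv_inner g g"
    unfolding L2xv_inner_def by (rule set_integral_add(2)[OF set_integral_add(1)[OF ff fg] gg])
  also have "(LINT z:phase_dom|lborel. f z * f z + 2 * (f z * g z)) = L2xv_inner f f + 2 * L2xv_inner f g"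
    unfolding L2xv_inner_def set_integral_add(2)[OF ff fg] by simp
  finally show ?thesis .
qed

lemma L2xv_inner_self_add_sum:
  fixes u :: "(real^'d) \<times> (real^'d) \<Rightarrow> real" and \<sigma> :: "'k \<Rightarrow> (real^'d) \<times> (real^'d) \<Rightarrow> real"
    and d :: "'k \<Rightarrow> real"
  assumes "in_L2xv u" "\<And>k. k \<in> A \<Longrightarrow> in_L2xv (\<sigma> k)"
  defines "v \<equiv> \<lambda>z. u z + (\<Sum>k\<in>A. d k * \<sigma> k z)"
  shows "L2xv_inner v v = L2xv_inner u u + 2 * (\<Sum>k\<in>A. d k * L2xv_inner u (\<sigma> k))
    + (\<Sum>k\<in>A. \<Sum>j\<in>A. d k * d j * L2xv_inner (\<sigma> k) (\<sigma> j))"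
proof -
  let ?w = "\<lambda>z. \<Sum>k\<in>A. d k * \<sigma> k z"
  have w: "in_L2xv ?w"
    using assms by (intro in_L2xv_sum)
  have "L2xv_inner ?w ?w = (\<Sum>k\<in>A. d k * L2xv_inner ?w (\<sigma> k))"
    using assms w by (intro L2xv_inner_sum_right)
  also have "\<dots> = (\<Sum>k\<in>A. \<Sum>j\<in>A. d k * d j * L2xv_inner (\<sigma> k) (\<sigma> j))"
    using assms by (simp add: L2xv_inner_commute[of ?w] L2xv_inner_sum_right sum_distrib_left mult.assoc)
  finally show ?thesis
    using assms w by (simp add: L2xv_inner_add_self L2xv_inner_sum_right)
qed

lemma x_periodic_comp_splitting_map:
  assumes "periodic_on_torus E" "x_periodic f"
  shows "x_periodic (f \<circ> splitting_map E t)"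
proof -
  have "splitting_map E t (x + z, v) = (fst (splitting_map E t (x, v)) + z, snd (splitting_map E t (x, v)))"
    if "int_vec z" for x z v
    using assms(1) that by (simp add: periodic_on_torus_def splitting_map_def algebra_simps)
  then show ?thesis
    using assms(2) by (simp add: x_periodic_def)
qed

lemma set_integrable_square_iff_nn_integral:
  fixes f :: "(real^'d) \<times> (real^'d) \<Rightarrow> real"
  assumes [measurable]: "f \<in> borel_measurable borel"
  shows "set_integrable lborel phase_dom (\<lambda>z. (f z)\<^sup>2)
     \<longleftrightarrow> (\<integral>\<^sup>+z. indicator phase_dom z * ennreal ((f z)\<^sup>2) \<partial>lborel) < \<infinity>"
  unfolding set_integrable_def integrable_iff_bounded
  by (simp add: indicator_mult_ennreal mult.commute)

lemma L2xv_inner_self_eq_nn_integral: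
  fixes f :: "(real^'d) \<times> (real^'d) \<Rightarrow> real"
  assumes [measurable]: "f \<in> borel_measurable borel"
  shows "L2xv_inner f f = enn2real (\<integral>\<^sup>+z. indicator phase_dom z * ennreal ((f z)\<^sup>2) \<partial>lborel)"
  unfolding L2xv_inner_def set_lebesgue_integral_def
  by (subst integral_eq_nn_integral)
     (auto intro!: arg_cong[where f = enn2real] nn_integral_cong simp: indicator_def power2_eq_square)

lemma
  fixes f :: "(real^'d) \<times> (real^'d) \<Rightarrow> real"
  assumes f: "in_L2xv f" and E: "periodic_on_torus E" "E \<in> borel_measurable borel"
  shows in_L2xv_S2_S1: "in_L2xv (S2 E t (S1 t f))"
    and L2xv_inner_S2_S1_self: "L2xv_inner (S2 E t (S1 t f)) (S2 E t (S1 t f)) = L2xv_inner f f"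
proof -
  have [measurable]: "f \<in> borel_measurable borel" "E \<in> borel_measurable borel"
    using f E by (simp_all add: in_L2xv_def)
  have "x_periodic (\<lambda>z. ennreal ((f z)\<^sup>2))"
    using f by (simp add: in_L2xv_def x_periodic_def)
  then have nn: "(\<integral>\<^sup>+z. indicator phase_dom z * ennreal ((f (splitting_map E t z))\<^sup>2) \<partial>lborel)
      = (\<integral>\<^sup>+z. indicator phase_dom z * ennreal ((f z)\<^sup>2) \<partial>lborel)"
    using nn_integral_phase_dom_splitting_map[of "\<lambda>z. ennreal ((f z)\<^sup>2)" E t] by simp
  have per: "x_periodic (f \<circ> splitting_map E t)"
    using E f by (simp add: in_L2xv_def x_periodic_comp_splitting_map)
  show "in_L2xv (S2 E t (S1 t f))"
    using f nn per
    by (simp add: in_L2xv_def S2_S1_eq_splitting_map set_integrable_square_iff_nn_integral)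
  show "L2xv_inner (S2 E t (S1 t f)) (S2 E t (S1 t f)) = L2xv_inner f f"
    using nn by (simp add: S2_S1_eq_splitting_map L2xv_inner_self_eq_nn_integral)
qed

section \<open>Gaussian increments independent of the past\<close>

lemma (in prob_space) centered_normal_moments:
  assumes h: "0 < h" and X: "distributed M lborel X (normal_density 0 (sqrt h))"
  shows "integrable M X" "expectation X = 0"
    "integrable M (\<lambda>\<omega>. X \<omega> * X \<omega>)" "expectation (\<lambda>\<omega>. X \<omega> * X \<omega>) = h"
proof -
  have sh: "0 < sqrt h"
    using h by simp
  show "integrable M X"
    by (rule distributed_integrable_var[OF X]) (auto intro: integrable_normal_moment_nz_1[OF sh])
  show mean: "expectation X = 0"
    by (rule normal_distributed_expectation[OF sh X])
  show "integrable M (\<lambda>\<omega>. X \<omega> * X \<omega>)"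
    using distributed_integrable[OF X, of "\<lambda>x. x * x"] integrable_normal_moment[OF sh, of 0 2]
    by (simp add: power2_eq_square)
  have "variance X = (sqrt h)\<^sup>2"
    by (rule normal_distributed_variance[OF sh X])
  then show "expectation (\<lambda>\<omega>. X \<omega> * X \<omega>) = h"
    using mean h by (simp add: power2_eq_square)
qed

lemma (in prob_space)
  fixes X Y :: "'a \<Rightarrow> real"
  assumes indep: "indep_sets G I" and ij: "i \<in> I" "j \<in> I" "i \<noteq> j"
    and X: "X \<in> borel_measurable M" "{X -` A \<inter> space M | A. A \<in> sets borel} \<subseteq> G i"
    and Y: "Y \<in> borel_measurable M" "{Y -` A \<inter> space M | A. A \<in> sets borel} \<subseteq> G j"
    and int: "integrable M X" "integrable M Y"
  shows indep_sets_integrable_mult: "integrable M (\<lambda>\<omega>. X \<omega> * Y \<omega>)"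
    and indep_sets_integral_mult: "(\<integral>\<omega>. X \<omega> * Y \<omega> \<partial>M) = expectation X * expectation Y"
proof -
  define Z where "Z l = (if l = i then X else Y)" for l
  have "indep_vars (\<lambda>_. borel) Z {i, j}"
    unfolding indep_vars_def2
  proof
    show "\<forall>l\<in>{i, j}. random_variable borel (Z l)"
      using X Y by (auto simp: Z_def)
    show "indep_sets (\<lambda>l. {Z l -` A \<inter> space M |A. A \<in> sets borel}) {i, j}"
      using X Y ij by (intro indep_sets_mono[OF indep]) (auto simp: Z_def)
  qed
  moreover have "\<And>l. l \<in> {i, j} \<Longrightarrow> integrable M (Z l)"
    using int by (auto simp: Z_def)
  ultimately show "integrable M (\<lambda>\<omega>. X \<omega> * Y \<omega>)"
    and "(\<integral>\<omega>. X \<omega> * Y \<omega> \<partial>M) = expectation X * expectation Y"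
    using indep_vars_integrable[of "{i, j}" Z] indep_vars_lebesgue_integral[of "{i, j}" Z] ij(3)
    by (simp_all add: Z_def)
qed

locale gaussian_increments = prob_space M for M :: "'a measure" +
  fixes N :: "'a measure" and K :: nat and \<delta> :: "nat \<Rightarrow> 'a \<Rightarrow> real" and h :: real
  assumes subalgebra: "subalgebra M N"
    and indep: "indep_sets (\<lambda>i. case i of None \<Rightarrow> sets N
                  | Some k \<Rightarrow> {\<delta> k -` A \<inter> space M | A. A \<in> sets borel})
                (insert None (Some ` {..<K}))"
    and normal: "\<And>k. k < K \<Longrightarrow> distributed M lborel (\<delta> k) (normal_density 0 (sqrt h))"
    and step_pos: "0 < h"
begin

lemma increment_measurable: "k < K \<Longrightarrow> \<delta> k \<in> borel_measurable M"
  using distributed_measurable[OF normal] by simp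

lemma
  assumes k: "k < K" and Y: "Y \<in> borel_measurable N" "integrable M Y"
  shows integrable_increment_mult_past: "integrable M (\<lambda>\<omega>. \<delta> k \<omega> * Y \<omega>)"
    and integral_increment_mult_past: "(\<integral>\<omega>. \<delta> k \<omega> * Y \<omega> \<partial>M) = 0"
proof -
  have "Y \<in> borel_measurable M"
    using measurable_from_subalg[OF subalgebra Y(1)] .
  moreover have "{Y -` A \<inter> space M | A. A \<in> sets borel} \<subseteq> sets N"
    using measurable_sets[OF Y(1)] subalgebra by (auto simp: subalgebra_def)
  moreover note moments = centered_normal_moments[OF step_pos normal[OF k]]
  ultimately show "integrable M (\<lambda>\<omega>. \<delta> k \<omega> * Y \<omega>)" "(\<integral>\<omega>. \<delta> k \<omega> * Y \<omega> \<partial>M) = 0"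
    using indep_sets_integrable_mult[OF indep, of "Some k" None] indep_sets_integral_mult[OF indep, of "Some k" None]
      increment_measurable[OF k] k Y(2) by auto
qed

lemma integrable_increment_mult:
  assumes "k < K" "j < K"
  shows "integrable M (\<lambda>\<omega>. \<delta> k \<omega> * \<delta> j \<omega>)"
  using indep_sets_integrable_mult[OF indep, of "Some k" "Some j"]
    centered_normal_moments[OF step_pos normal] increment_measurable assms
  by (cases "k = j") auto

lemma integral_increment_mult:
  assumes "k < K" "j < K"
  shows "(\<integral>\<omega>. \<delta> k \<omega> * \<delta> j \<omega> \<partial>M) = (if k = j then h else 0)"
  using indep_sets_integral_mult[OF indep, of "Some k" "Some j"]
    centered_normal_moments[OF step_pos normal] increment_measurable assms
  by (cases "k = j") auto

lemma expected_energy_add_noise: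
  fixes u :: "'a \<Rightarrow> (real^'d) \<times> (real^'d) \<Rightarrow> real" and \<sigma> :: "nat \<Rightarrow> (real^'d) \<times> (real^'d) \<Rightarrow> real"
  assumes \<sigma>: "\<And>k. k < K \<Longrightarrow> in_L2xv (\<sigma> k)"
    and u: "\<And>\<omega>. \<omega> \<in> space M \<Longrightarrow> in_L2xv (u \<omega>)"
    and u_past: "\<And>k. k < K \<Longrightarrow> (\<lambda>\<omega>. L2xv_inner (u \<omega>) (\<sigma> k)) \<in> borel_measurable N"
    and u_int: "integrable M (\<lambda>\<omega>. L2xv_inner (u \<omega>) (u \<omega>))"
  defines "v \<equiv> \<lambda>\<omega> z. u \<omega> z + (\<Sum>k<K. \<delta> k \<omega> * \<sigma> k z)"
  shows "integrable M (\<lambda>\<omega>. L2xv_inner (v \<omega>) (v \<omega>))"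
    and "(\<integral>\<omega>. L2xv_inner (v \<omega>) (v \<omega>) \<partial>M)
       = (\<integral>\<omega>. L2xv_inner (u \<omega>) (u \<omega>) \<partial>M) + h * (\<Sum>k<K. L2xv_inner (\<sigma> k) (\<sigma> k))"
proof -
  define cross where "cross = (\<lambda>\<omega>. 2 * (\<Sum>k<K. \<delta> k \<omega> * L2xv_inner (u \<omega>) (\<sigma> k)))"
  define quad where "quad = (\<lambda>\<omega>. \<Sum>k<K. \<Sum>j<K. \<delta> k \<omega> * \<delta> j \<omega> * L2xv_inner (\<sigma> k) (\<sigma> j))"
  have v: "L2xv_inner (v \<omega>) (v \<omega>) = L2xv_inner (u \<omega>) (u \<omega>) + cross \<omega> + quad \<omega>" if "\<omega> \<in> space M" for \<omega>
    using L2xv_inner_self_add_sum[OF u[OF that], of "{..<K}" \<sigma> "\<lambda>k. \<delta> k \<omega>"] \<sigma>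
    by (simp add: v_def cross_def quad_def)
  have past_int: "integrable M (\<lambda>\<omega>. L2xv_inner (u \<omega>) (\<sigma> k))" if k: "k < K" for k
  proof (rule Bochner_Integration.integrable_bound)
    show "integrable M (\<lambda>\<omega>. L2xv_inner (u \<omega>) (u \<omega>) + L2xv_inner (\<sigma> k) (\<sigma> k))"
      using u_int by simp
    show "(\<lambda>\<omega>. L2xv_inner (u \<omega>) (\<sigma> k)) \<in> borel_measurable M"
      by (rule measurable_from_subalg[OF subalgebra u_past[OF k]])
    show "AE \<omega> in M. norm (L2xv_inner (u \<omega>) (\<sigma> k))
        \<le> norm (L2xv_inner (u \<omega>) (u \<omega>) + L2xv_inner (\<sigma> k) (\<sigma> k))"
      using abs_L2xv_inner_le[OF u \<sigma>[OF k]] L2xv_inner_self_nonneg by (intro AE_I2) force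
  qed
  have "integrable M (\<lambda>\<omega>. \<delta> k \<omega> * L2xv_inner (u \<omega>) (\<sigma> k))"
    "(\<integral>\<omega>. \<delta> k \<omega> * L2xv_inner (u \<omega>) (\<sigma> k) \<partial>M) = 0" if k: "k < K" for k
    using integrable_increment_mult_past[OF k u_past[OF k] past_int[OF k]]
      integral_increment_mult_past[OF k u_past[OF k] past_int[OF k]] .
  then have cross: "integrable M cross" "(\<integral>\<omega>. cross \<omega> \<partial>M) = 0"
    by (auto simp: cross_def Bochner_Integration.integral_sum intro!: Bochner_Integration.integrable_sum)
  have prod_int: "integrable M (\<lambda>\<omega>. \<delta> k \<omega> * \<delta> j \<omega> * L2xv_inner (\<sigma> k) (\<sigma> j))"
    and prod_integral: "(\<integral>\<omega>. \<delta> k \<omega> * \<delta> j \<omega> * L2xv_inner (\<sigma> k) (\<sigma> j) \<partial>M)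
       = (if k = j then h * L2xv_inner (\<sigma> k) (\<sigma> k) else 0)" if "k < K" "j < K" for k j
    using integrable_increment_mult[OF that] integral_increment_mult[OF that] by auto
  have quad_int: "integrable M quad"
    unfolding quad_def by (intro Bochner_Integration.integrable_sum prod_int) auto
  have "(\<integral>\<omega>. quad \<omega> \<partial>M) = (\<Sum>k<K. \<integral>\<omega>. (\<Sum>j<K. \<delta> k \<omega> * \<delta> j \<omega> * L2xv_inner (\<sigma> k) (\<sigma> j)) \<partial>M)"
    unfolding quad_def
    by (rule Bochner_Integration.integral_sum) (auto intro!: Bochner_Integration.integrable_sum prod_int)
  also have "\<dots> = (\<Sum>k<K. \<Sum>j<K. \<integral>\<omega>. \<delta> k \<omega> * \<delta> j \<omega> * L2xv_inner (\<sigma> k) (\<sigma> j) \<partial>M)"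
    by (intro sum.cong refl Bochner_Integration.integral_sum prod_int) auto
  also have "\<dots> = (\<Sum>k<K. \<Sum>j<K. if k = j then h * L2xv_inner (\<sigma> k) (\<sigma> k) else 0)"
    by (intro sum.cong refl prod_integral) auto
  also have "\<dots> = (\<Sum>k<K. h * L2xv_inner (\<sigma> k) (\<sigma> k))"
    by (intro sum.cong refl) simp
  finally have quad: "integrable M quad" "(\<integral>\<omega>. quad \<omega> \<partial>M) = h * (\<Sum>k<K. L2xv_inner (\<sigma> k) (\<sigma> k))"
    using quad_int by (simp_all add: sum_distrib_left)
  have "integrable M (\<lambda>\<omega>. L2xv_inner (u \<omega>) (u \<omega>) + cross \<omega> + quad \<omega>)"
    using u_int cross quad by simp
  moreover have "integrable M (\<lambda>\<omega>. L2xv_inner (v \<omega>) (v \<omega>))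
      \<longleftrightarrow> integrable M (\<lambda>\<omega>. L2xv_inner (u \<omega>) (u \<omega>) + cross \<omega> + quad \<omega>)"
    by (rule Bochner_Integration.integrable_cong) (simp_all add: v)
  ultimately show "integrable M (\<lambda>\<omega>. L2xv_inner (v \<omega>) (v \<omega>))"
    by blast
  have "(\<integral>\<omega>. L2xv_inner (v \<omega>) (v \<omega>) \<partial>M) = (\<integral>\<omega>. L2xv_inner (u \<omega>) (u \<omega>) + cross \<omega> + quad \<omega> \<partial>M)"
    using v by (rule Bochner_Integration.integral_cong[OF refl])
  also have "\<dots> = (\<integral>\<omega>. L2xv_inner (u \<omega>) (u \<omega>) \<partial>M) + h * (\<Sum>k<K. L2xv_inner (\<sigma> k) (\<sigma> k))"
    using u_int cross quad by simp
  finally show "(\<integral>\<omega>. L2xv_inner (v \<omega>) (v \<omega>) \<partial>M)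
      = (\<integral>\<omega>. L2xv_inner (u \<omega>) (u \<omega>) \<partial>M) + h * (\<Sum>k<K. L2xv_inner (\<sigma> k) (\<sigma> k))" .
qed

end

section \<open>The splitting scheme\<close>

lemma continuous_on_smooth_fun: "smooth_fun f \<Longrightarrow> continuous_on UNIV f"
  unfolding smooth_fun_def
  by (metis differentiable_imp_continuous_on differentiable_at_imp_differentiable_on iter_deriv.simps(1))

lemma borel_measurable_smooth_components:
  fixes E :: "'a::real_normed_vector \<Rightarrow> real^'n"
  assumes "\<forall>i. smooth_fun (\<lambda>x. E x $ i)"
  shows "E \<in> borel_measurable borel"
proof -
  have "continuous_on UNIV (\<lambda>x. E x $ i)" for i
    using assms continuous_on_smooth_fun by blast
  then have "continuous_on UNIV E"
    using continuous_on_vec_lambda[of UNIV "\<lambda>i x. E x $ i"] by simp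
  then show ?thesis
    by (rule borel_measurable_continuous_onI)
qed

lemma measurable_S2_S1_param:
  assumes [measurable]: "(\<lambda>p. G (fst p) (snd p)) \<in> borel_measurable (N \<Otimes>\<^sub>M lborel)"
    "E \<in> borel_measurable borel"
  shows "(\<lambda>p. S2 E t (S1 t (G (fst p))) (snd p)) \<in> borel_measurable (N \<Otimes>\<^sub>M lborel)"
proof -
  have "(\<lambda>p. (fst p, splitting_map E t (snd p))) \<in> N \<Otimes>\<^sub>M lborel \<rightarrow>\<^sub>M N \<Otimes>\<^sub>M lborel"
    by measurable
  from measurable_compose[OF this assms(1)] show ?thesis
    by (simp add: S2_S1_eq_splitting_map comp_def)
qed

lemma L2xv_inner_measurable:
  assumes [measurable]: "(\<lambda>p. G (fst p) (snd p)) \<in> borel_measurable (N \<Otimes>\<^sub>M lborel)"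
    "g \<in> borel_measurable borel"
  shows "(\<lambda>\<omega>. L2xv_inner (G \<omega>) g) \<in> borel_measurable N"
proof -
  have "(\<lambda>(\<omega>, z). indicator phase_dom z *\<^sub>R (G \<omega> z * g z)) \<in> borel_measurable (N \<Otimes>\<^sub>M lborel)"
    unfolding case_prod_unfold by measurable
  then show ?thesis
    unfolding L2xv_inner_def set_lebesgue_integral_def
    by (rule lborel.borel_measurable_lebesgue_integral)
qed

lemma f_add_measurable:
  fixes N :: "'w measure"
  assumes [measurable]: "E \<in> borel_measurable borel" "f0 \<in> borel_measurable borel"
    and \<sigma>: "\<And>k. k < K \<Longrightarrow> \<sigma> k \<in> borel_measurable borel"
    and \<beta>: "\<And>k j. k < K \<Longrightarrow> j \<le> n \<Longrightarrow> \<beta> k (real j * \<tau>) \<in> borel_measurable N"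
  shows "(\<lambda>p. f_add E \<sigma> K \<beta> \<tau> f0 n (fst p) (snd p)) \<in> borel_measurable (N \<Otimes>\<^sub>M lborel)"
  using \<beta>
proof (induction n)
  case (Suc n)
  then have "(\<lambda>p. f_add E \<sigma> K \<beta> \<tau> f0 n (fst p) (snd p)) \<in> borel_measurable (N \<Otimes>\<^sub>M lborel)"
    by simp
  moreover have "(\<lambda>p. (\<beta> k (real (Suc n) * \<tau>) (fst p) - \<beta> k (real n * \<tau>) (fst p)) * \<sigma> k (snd p))
      \<in> borel_measurable (N \<Otimes>\<^sub>M lborel)" if "k < K" for k
  proof -
    have [measurable]: "\<beta> k (real (Suc n) * \<tau>) \<in> borel_measurable N" "\<beta> k (real n * \<tau>) \<in> borel_measurable N"
      "\<sigma> k \<in> borel_measurable borel"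
      using Suc.prems \<sigma> that by (auto simp del: of_nat_Suc)
    show ?thesis
      by measurable
  qed
  ultimately show ?case
    by (auto intro!: borel_measurable_add borel_measurable_sum measurable_S2_S1_param simp del: of_nat_Suc)
qed simp

lemma wiener_family_subalgebra:
  assumes "wiener_family M F K \<beta>"
  shows "subalgebra M (sigma (space M) (F t))"
  using assms by (simp add: wiener_family_def subalgebra_def sigma_algebra.sets_measure_of_eq space_measure_of_conv)

lemma wiener_family_measurable_filtration:
  assumes W: "wiener_family M F K \<beta>" and "k < K" "0 \<le> r" "r \<le> t"
  shows "\<beta> k r \<in> borel_measurable (sigma (space M) (F t))"
proof (rule measurableI)
  fix A :: "real set"
  assume "A \<in> sets borel"
  then have "\<beta> k r -` A \<inter> space M \<in> F t"
    using assms unfolding wiener_family_def by blast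
  then show "\<beta> k r -` A \<inter> space (sigma (space M) (F t)) \<in> sets (sigma (space M) (F t))"
    using W by (simp add: wiener_family_def sigma_algebra.sets_measure_of_eq space_measure_of_conv)
qed (simp add: space_measure_of_conv)

lemma wiener_family_measurable:
  assumes "wiener_family M F K \<beta>" "k < K" "0 \<le> r"
  shows "\<beta> k r \<in> borel_measurable M"
  using assms by (intro measurable_from_subalg[OF wiener_family_subalgebra wiener_family_measurable_filtration]) auto

lemma wiener_family_gaussian_increments:
  assumes W: "wiener_family M F K \<beta>" and st: "0 \<le> s" "s < t"
  shows "gaussian_increments M (sigma (space M) (F s)) K (\<lambda>k \<omega>. \<beta> k t \<omega> - \<beta> k s \<omega>) (t - s)"
proof -
  interpret prob_space M
    using W by (simp add: wiener_family_def)
  have "sets (sigma (space M) (F s)) = F s"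
    using W by (simp add: wiener_family_def sigma_algebra.sets_measure_of_eq)
  moreover have "indep_sets (\<lambda>i. case i of None \<Rightarrow> F s
      | Some k \<Rightarrow> {(\<lambda>\<omega>. \<beta> k t \<omega> - \<beta> k s \<omega>) -` A \<inter> space M | A. A \<in> sets borel})
    (insert None (Some ` {..<K}))"
    using W st by (simp add: wiener_family_def)
  ultimately show ?thesis
    using W st wiener_family_subalgebra[OF W]
    by unfold_locales (simp_all add: wiener_family_def)
qed

lemma L2xv_inner_S2_S1_f_add_adapted:
  assumes W: "wiener_family M F K \<beta>"
    and [measurable]: "E \<in> borel_measurable borel" "f0 \<in> borel_measurable borel" "g \<in> borel_measurable borel"
    and \<sigma>: "\<And>k. k < K \<Longrightarrow> \<sigma> k \<in> borel_measurable borel" and \<tau>: "0 \<le> \<tau>"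
  shows "(\<lambda>\<omega>. L2xv_inner (S2 E \<tau> (S1 \<tau> (f_add E \<sigma> K \<beta> \<tau> f0 n \<omega>))) g)
    \<in> borel_measurable (sigma (space M) (F (real n * \<tau>)))"
proof -
  have "(\<lambda>p. f_add E \<sigma> K \<beta> \<tau> f0 n (fst p) (snd p))
      \<in> borel_measurable (sigma (space M) (F (real n * \<tau>)) \<Otimes>\<^sub>M lborel)"
    using \<sigma> \<tau> by (intro f_add_measurable wiener_family_measurable_filtration[OF W])
      (auto intro: mult_right_mono)
  then show ?thesis
    by (intro L2xv_inner_measurable measurable_S2_S1_param) auto
qed

lemma f_add_energy_identity:
  fixes M :: "'w measure" and E :: "real^'d \<Rightarrow> real^'d"
  assumes W: "wiener_family M F K \<beta>" and E: "periodic_on_torus E" "E \<in> borel_measurable borel"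
    and \<sigma>: "\<And>k. k < K \<Longrightarrow> in_L2xv (\<sigma> k)" and f0: "in_L2xv f0" and \<tau>: "0 < \<tau>"
  defines "X \<equiv> f_add E \<sigma> K \<beta> \<tau> f0"
  shows "(\<forall>\<omega>\<in>space M. in_L2xv (X n \<omega>)) \<and> integrable M (\<lambda>\<omega>. L2xv_inner (X n \<omega>) (X n \<omega>))
    \<and> (\<integral>\<omega>. L2xv_inner (X n \<omega>) (X n \<omega>) \<partial>M)
      = L2xv_inner f0 f0 + real n * \<tau> * (\<Sum>k<K. L2xv_inner (\<sigma> k) (\<sigma> k))"
proof (induction n)
  case 0
  interpret prob_space M
    using W by (simp add: wiener_family_def)
  show ?case
    using f0 by (simp add: X_def prob_space)
next
  case (Suc n)
  define s t where "s = real n * \<tau>" and "t = real (Suc n) * \<tau>"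
  interpret gaussian_increments M "sigma (space M) (F s)" K "\<lambda>k \<omega>. \<beta> k t \<omega> - \<beta> k s \<omega>" \<tau>
    using wiener_family_gaussian_increments[OF W, of s t] \<tau> by (simp add: s_def t_def algebra_simps)
  define u where "u \<omega> = S2 E \<tau> (S1 \<tau> (X n \<omega>))" for \<omega>
  have u: "in_L2xv (u \<omega>)" "L2xv_inner (u \<omega>) (u \<omega>) = L2xv_inner (X n \<omega>) (X n \<omega>)"
    if "\<omega> \<in> space M" for \<omega>
    using Suc.IH that E by (simp_all add: u_def in_L2xv_S2_S1 L2xv_inner_S2_S1_self)
  have u_past: "(\<lambda>\<omega>. L2xv_inner (u \<omega>) (\<sigma> k)) \<in> borel_measurable (sigma (space M) (F s))"
    if "k < K" for k
    unfolding u_def X_def s_def using \<sigma> that E f0 \<tau>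
    by (intro L2xv_inner_S2_S1_f_add_adapted[OF W]) (auto simp: in_L2xv_def)
  have "integrable M (\<lambda>\<omega>. L2xv_inner (u \<omega>) (u \<omega>))
      \<longleftrightarrow> integrable M (\<lambda>\<omega>. L2xv_inner (X n \<omega>) (X n \<omega>))"
    by (rule Bochner_Integration.integrable_cong) (simp_all add: u)
  then have u_int: "integrable M (\<lambda>\<omega>. L2xv_inner (u \<omega>) (u \<omega>))"
    using Suc.IH by blast
  have u_mean: "(\<integral>\<omega>. L2xv_inner (u \<omega>) (u \<omega>) \<partial>M) = (\<integral>\<omega>. L2xv_inner (X n \<omega>) (X n \<omega>) \<partial>M)"
    using u(2) by (rule Bochner_Integration.integral_cong[OF refl])
  have X_Suc: "X (Suc n) = (\<lambda>\<omega> z. u \<omega> z + (\<Sum>k<K. (\<beta> k t \<omega> - \<beta> k s \<omega>) * \<sigma> k z))"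
    by (simp add: X_def u_def s_def t_def fun_eq_iff del: of_nat_Suc)
  have "\<forall>\<omega>\<in>space M. in_L2xv (X (Suc n) \<omega>)"
    unfolding X_Suc using u(1) \<sigma> by (auto intro!: in_L2xv_add in_L2xv_sum)
  then show ?case
    using expected_energy_add_noise[where u = u and \<sigma> = \<sigma>, OF \<sigma> u(1) u_past u_int] Suc.IH u_mean
    unfolding X_Suc by (simp add: algebra_simps)
qed

theorem proposition4p2:
  fixes M :: "'w measure" and F :: "real \<Rightarrow> 'w set set" and K :: nat
    and \<beta> :: "nat \<Rightarrow> real \<Rightarrow> 'w \<Rightarrow> real"
    and E :: "real^'d \<Rightarrow> real^'d"
    and \<sigma> :: "nat \<Rightarrow> (real^'d) \<times> (real^'d) \<Rightarrow> real"
    and f0 :: "(real^'d) \<times> (real^'d) \<Rightarrow> real" and \<tau> :: real and n :: nat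
  assumes W: "wiener_family M F K \<beta>"
    and E_per: "periodic_on_torus E"
    and E_smooth: "\<forall>i. smooth_fun (\<lambda>x. E x $ i)"
    and \<sigma>_per: "\<forall>k<K. x_periodic (\<sigma> k)"
    and \<sigma>_smooth: "\<forall>k<K. smooth_fun (\<sigma> k)"
    and \<sigma>_L2: "\<forall>k<K. in_L2xv (\<sigma> k)"
    and f0_L2: "in_L2xv f0"
    and \<tau>: "0 < \<tau>" "\<tau> < 1"
  shows "(\<lambda>(\<omega>, z). f_add E \<sigma> K \<beta> \<tau> f0 n \<omega> z) \<in> borel_measurable (M \<Otimes>\<^sub>M lborel)
    \<and> (\<forall>\<omega>\<in>space M. in_L2xv (f_add E \<sigma> K \<beta> \<tau> f0 n \<omega>))
    \<and> integrable M (\<lambda>\<omega>. (L2xv_norm (f_add E \<sigma> K \<beta> \<tau> f0 n \<omega>))\<^sup>2)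
    \<and> (\<integral>\<omega>. (L2xv_norm (f_add E \<sigma> K \<beta> \<tau> f0 n \<omega>))\<^sup>2 \<partial>M)
        = (L2xv_norm f0)\<^sup>2 + (real n * \<tau>) * (\<Sum>k<K. (L2xv_norm (\<sigma> k))\<^sup>2)"
proof -
  \<comment> \<open>Smoothness of \<open>E\<close> is used only for its measurability.\<close>
  have E: "E \<in> borel_measurable borel"
    using E_smooth by (rule borel_measurable_smooth_components)
  have "(\<lambda>p. f_add E \<sigma> K \<beta> \<tau> f0 n (fst p) (snd p)) \<in> borel_measurable (M \<Otimes>\<^sub>M lborel)"
    using E f0_L2 \<sigma>_L2 \<tau>(1)
    by (intro f_add_measurable wiener_family_measurable[OF W]) (auto simp: in_L2xv_def)
  moreover have "(\<forall>\<omega>\<in>space M. in_L2xv (f_add E \<sigma> K \<beta> \<tau> f0 n \<omega>))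
    \<and> integrable M (\<lambda>\<omega>. L2xv_inner (f_add E \<sigma> K \<beta> \<tau> f0 n \<omega>) (f_add E \<sigma> K \<beta> \<tau> f0 n \<omega>))
    \<and> (\<integral>\<omega>. L2xv_inner (f_add E \<sigma> K \<beta> \<tau> f0 n \<omega>) (f_add E \<sigma> K \<beta> \<tau> f0 n \<omega>) \<partial>M)
      = L2xv_inner f0 f0 + real n * \<tau> * (\<Sum>k<K. L2xv_inner (\<sigma> k) (\<sigma> k))"
    using \<sigma>_L2 by (intro f_add_energy_identity[OF W E_per E _ f0_L2 \<tau>(1)]) auto
  ultimately show ?thesis
    by (simp add: power2_L2xv_norm case_prod_unfold)
qed

end
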